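(* Let $\mathfrak{K}$ be a 2-category, let $\mathscr{A}$ be an object of $\mathfrak{K}$, and let $T=(T,\mu,\eta)$ be a monad on $\mathscr{A}$. Let $G\dashv S$ be an adjunction between endomorphisms $G,S\colon\mathscr{A}\to\mathscr{A}$, with unit $u\colon 1_{\mathscr{A}}\Rightarrow SG$ and counit $e\colon GS\Rightarrow 1_{\mathscr{A}}$. Then adjoint mateship, given on 2-cells by $$\zeta = eTG\circ G\lambda G\circ GTu,\qquad \delta = eTGG\circ G\nu GG\circ GSuG\circ Gu,\qquad \varepsilon = eT\circ G\sigma,$$ (which is a bijection between triples of 2-cells $(\nu\colon SS\Rightarrow ST,\ \sigma\colon 1_{\mathscr{A}}\Rightarrow ST,\ \lambda\colon TS\Rightarrow ST)$ and triples $(\delta\colon G\Rightarrow TGG,\ \varepsilon\colon G\Rightarrow T,\ \zeta\colon GT\Rightarrow TG)$) restricts to a bijection between wreath structures $(\nu,\sigma,\lambda)$ on $S$ around $T$ and mixed opwreath structures $(\zeta,\delta,\varepsilon)$ on $G$ around $T$.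
   Context: Notation: composition of 1-cells is written by juxtaposition ($XY=X\circ Y$), and whiskering of a 2-cell $\alpha$ by 1-cells is written $X\alpha$, $\alpha Y$; $\circ$ between 2-cells is vertical composition. A wreath around the monad $T$ on $\mathscr{A}$ consists of an endomorphism $S$ of $\mathscr{A}$ and 2-cells $\nu\colon SS\Rightarrow ST$, $\sigma\colon 1_{\mathscr{A}}\Rightarrow ST$, $\lambda\colon TS\Rightarrow ST$ satisfying the seven axioms: (W1) $\lambda\circ\mu S = S\mu\circ\lambda T\circ T\lambda$; (W2) $\lambda\circ\eta S = S\eta$; (W3) $S\mu\circ\lambda T\circ T\sigma = S\mu\circ\sigma T$; (W4) $S\mu\circ\nu T\circ S\lambda\circ\lambda S = S\mu\circ\lambda T\circ T\nu$; (W5) $S\mu\circ\nu T\circ S\nu = S\mu\circ\nu T\circ S\lambda\circ\nu S$; (W6) $S\mu\circ\nu T\circ S\sigma = S\eta$; (W7) $S\mu\circ\nu T\circ S\lambda\circ\sigma S = S\eta$. (Equivalently, a wreath is a monad on $(\mathscr{A},T)$ in the 2-category $\mathrm{EM}(\mathfrak{K})$ of monads, morphisms $(F,\phi)$ with $\phi\colon SF\Rightarrow FT$, and 2-cells $\rho\colon F\Rightarrow GS$.) A mixed opwreath around the monad $T$ consists of an endomorphism $G$ of $\mathscr{A}$ and 2-cells $\zeta\colon GT\Rightarrow TG$, $\delta\colon G\Rightarrow TGG$, $\varepsilon\colon G\Rightarrow T$ satisfying the seven axioms: (M1) $\zeta\circ G\mu = \mu G\circ T\zeta\circ\zeta T$;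 (M2) $\zeta\circ G\eta = \eta G$; (M3) $\mu\circ\varepsilon T = \mu\circ T\varepsilon\circ\zeta$; (M4) $\mu GG\circ T\zeta G\circ TG\zeta\circ\delta T = \mu GG\circ T\delta\circ\zeta$; (M5) $\mu GGG\circ T\delta G\circ\delta = \mu GGG\circ T\zeta GG\circ TG\delta\circ\delta$; (M6) $\mu G\circ T\varepsilon G\circ\delta = \eta G$; (M7) $\mu G\circ T\zeta\circ TG\varepsilon\circ\delta = \eta G$. (Equivalently, a comonad on $(\mathscr{A},T)$ in the Kleisli-completion 2-category $\mathrm{KL}(\mathfrak{K})$.) *)

theory Defs
  imports Main
begin

text \<open>Composition of 1-cells: cmp X Y = X Y = X after Y (requires src X = trg Y).\<close>

record ('o, 'm, 'c) two_cat =
  ob   :: "'o set"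
  hom  :: "'m set"
  src  :: "'m \<Rightarrow> 'o"
  trg  :: "'m \<Rightarrow> 'o"
  idm  :: "'o \<Rightarrow> 'm"
  cmp  :: "'m \<Rightarrow> 'm \<Rightarrow> 'm"
  cell :: "'c set"
  dom2 :: "'c \<Rightarrow> 'm"
  cod2 :: "'c \<Rightarrow> 'm"
  idc  :: "'m \<Rightarrow> 'c"
  vc   :: "'c \<Rightarrow> 'c \<Rightarrow> 'c"
  hc   :: "'c \<Rightarrow> 'c \<Rightarrow> 'c"

definition two_category :: "('o, 'm, 'c, 'x) two_cat_scheme \<Rightarrow> bool" where
  "two_category C \<longleftrightarrow>
     (\<forall>a\<in>ob C. idm C a \<in> hom C \<and> src C (idm C a) = a \<and> trg C (idm C a) = a)
   \<and> (\<forall>X\<in>hom C. src C X \<in> ob C \<and> trg C X \<in> ob C)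
   \<and> (\<forall>X\<in>hom C. \<forall>Y\<in>hom C. src C X = trg C Y \<longrightarrow>
        cmp C X Y \<in> hom C \<and> src C (cmp C X Y) = src C Y \<and> trg C (cmp C X Y) = trg C X)
   \<and> (\<forall>X\<in>hom C. \<forall>Y\<in>hom C. \<forall>Z\<in>hom C. src C X = trg C Y \<longrightarrow> src C Y = trg C Z \<longrightarrow>
        cmp C (cmp C X Y) Z = cmp C X (cmp C Y Z))
   \<and> (\<forall>X\<in>hom C. cmp C (idm C (trg C X)) X = X \<and> cmp C X (idm C (src C X)) = X)
   \<and> (\<forall>a\<in>cell C. dom2 C a \<in> hom C \<and> cod2 C a \<in> hom C
        \<and> src C (dom2 C a) = src C (cod2 C a) \<and> trg C (dom2 C a) = trg C (cod2 C a))
   \<and> (\<forall>X\<in>hom C. idc C X \<in> cell C \<and> dom2 C (idc C X) = X \<and> cod2 C (idc C X) = X)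
   \<and> (\<forall>a\<in>cell C. \<forall>b\<in>cell C. dom2 C a = cod2 C b \<longrightarrow>
        vc C a b \<in> cell C \<and> dom2 C (vc C a b) = dom2 C b \<and> cod2 C (vc C a b) = cod2 C a)
   \<and> (\<forall>a\<in>cell C. \<forall>b\<in>cell C. \<forall>c\<in>cell C. dom2 C a = cod2 C b \<longrightarrow> dom2 C b = cod2 C c \<longrightarrow>
        vc C (vc C a b) c = vc C a (vc C b c))
   \<and> (\<forall>a\<in>cell C. vc C (idc C (cod2 C a)) a = a \<and> vc C a (idc C (dom2 C a)) = a)
   \<and> (\<forall>a\<in>cell C. \<forall>b\<in>cell C. src C (dom2 C a) = trg C (dom2 C b) \<longrightarrow>
        hc C a b \<in> cell C \<and> dom2 C (hc C a b) = cmp C (dom2 C a) (dom2 C b)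
        \<and> cod2 C (hc C a b) = cmp C (cod2 C a) (cod2 C b))
   \<and> (\<forall>a\<in>cell C. \<forall>b\<in>cell C. \<forall>c\<in>cell C.
        src C (dom2 C a) = trg C (dom2 C b) \<longrightarrow> src C (dom2 C b) = trg C (dom2 C c) \<longrightarrow>
        hc C (hc C a b) c = hc C a (hc C b c))
   \<and> (\<forall>a\<in>cell C. hc C (idc C (idm C (trg C (dom2 C a)))) a = a
        \<and> hc C a (idc C (idm C (src C (dom2 C a)))) = a)
   \<and> (\<forall>X\<in>hom C. \<forall>Y\<in>hom C. src C X = trg C Y \<longrightarrow> hc C (idc C X) (idc C Y) = idc C (cmp C X Y))
   \<and> (\<forall>a\<in>cell C. \<forall>a'\<in>cell C. \<forall>b\<in>cell C. \<forall>b'\<in>cell C.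
        dom2 C a = cod2 C a' \<longrightarrow> dom2 C b = cod2 C b' \<longrightarrow> src C (dom2 C a) = trg C (dom2 C b) \<longrightarrow>
        hc C (vc C a a') (vc C b b') = vc C (hc C a b) (hc C a' b'))"

definition wl :: "('o, 'm, 'c, 'x) two_cat_scheme \<Rightarrow> 'm \<Rightarrow> 'c \<Rightarrow> 'c" where
  "wl C X a = hc C (idc C X) a"

definition wr :: "('o, 'm, 'c, 'x) two_cat_scheme \<Rightarrow> 'c \<Rightarrow> 'm \<Rightarrow> 'c" where
  "wr C a X = hc C a (idc C X)"

definition cell_in :: "('o, 'm, 'c, 'x) two_cat_scheme \<Rightarrow> 'c \<Rightarrow> 'm \<Rightarrow> 'm \<Rightarrow> bool" where
  "cell_in C a X Y \<longleftrightarrow> a \<in> cell C \<and> dom2 C a = X \<and> cod2 C a = Y"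

definition endo :: "('o, 'm, 'c, 'x) two_cat_scheme \<Rightarrow> 'o \<Rightarrow> 'm \<Rightarrow> bool" where
  "endo C A X \<longleftrightarrow> X \<in> hom C \<and> src C X = A \<and> trg C X = A"

definition monad :: "('o, 'm, 'c, 'x) two_cat_scheme \<Rightarrow> 'o \<Rightarrow> 'm \<Rightarrow> 'c \<Rightarrow> 'c \<Rightarrow> bool" where
  "monad C A T mu eta \<longleftrightarrow>
     endo C A T
   \<and> cell_in C mu (cmp C T T) T
   \<and> cell_in C eta (idm C A) T
   \<and> vc C mu (wl C T mu) = vc C mu (wr C mu T)
   \<and> vc C mu (wr C eta T) = idc C T
   \<and> vc C mu (wl C T eta) = idc C T"

definition adjunction :: "('o, 'm, 'c, 'x) two_cat_scheme \<Rightarrow> 'o \<Rightarrow> 'm \<Rightarrow> 'm \<Rightarrow> 'c \<Rightarrow> 'c \<Rightarrow> bool" where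
  "adjunction C A G S u e \<longleftrightarrow>
     endo C A G \<and> endo C A S
   \<and> cell_in C u (idm C A) (cmp C S G)
   \<and> cell_in C e (cmp C G S) (idm C A)
   \<and> vc C (wr C e G) (wl C G u) = idc C G
   \<and> vc C (wl C S e) (wr C u S) = idc C S"

definition wreath :: "('o, 'm, 'c, 'x) two_cat_scheme \<Rightarrow> 'o \<Rightarrow> 'm \<Rightarrow> 'c \<Rightarrow> 'c \<Rightarrow>
    'm \<Rightarrow> 'c \<Rightarrow> 'c \<Rightarrow> 'c \<Rightarrow> bool" where
  "wreath C A T mu eta S nu sigma lam \<longleftrightarrow>
     endo C A S
   \<and> cell_in C nu (cmp C S S) (cmp C S T)
   \<and> cell_in C sigma (idm C A) (cmp C S T)
   \<and> cell_in C lam (cmp C T S) (cmp C S T)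
   \<comment> \<open>W1\<close>
   \<and> vc C lam (wr C mu S) = vc C (wl C S mu) (vc C (wr C lam T) (wl C T lam))
   \<comment> \<open>W2\<close>
   \<and> vc C lam (wr C eta S) = wl C S eta
   \<comment> \<open>W3\<close>
   \<and> vc C (wl C S mu) (vc C (wr C lam T) (wl C T sigma)) = vc C (wl C S mu) (wr C sigma T)
   \<comment> \<open>W4\<close>
   \<and> vc C (wl C S mu) (vc C (wr C nu T) (vc C (wl C S lam) (wr C lam S)))
       = vc C (wl C S mu) (vc C (wr C lam T) (wl C T nu))
   \<comment> \<open>W5\<close>
   \<and> vc C (wl C S mu) (vc C (wr C nu T) (wl C S nu))
       = vc C (wl C S mu) (vc C (wr C nu T) (vc C (wl C S lam) (wr C nu S)))
   \<comment> \<open>W6\<close>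
   \<and> vc C (wl C S mu) (vc C (wr C nu T) (wl C S sigma)) = wl C S eta
   \<comment> \<open>W7\<close>
   \<and> vc C (wl C S mu) (vc C (wr C nu T) (vc C (wl C S lam) (wr C sigma S))) = wl C S eta"

definition mixed_opwreath :: "('o, 'm, 'c, 'x) two_cat_scheme \<Rightarrow> 'o \<Rightarrow> 'm \<Rightarrow> 'c \<Rightarrow> 'c \<Rightarrow>
    'm \<Rightarrow> 'c \<Rightarrow> 'c \<Rightarrow> 'c \<Rightarrow> bool" where
  "mixed_opwreath C A T mu eta G zeta delta eps \<longleftrightarrow>
     endo C A G
   \<and> cell_in C zeta (cmp C G T) (cmp C T G)
   \<and> cell_in C delta G (cmp C T (cmp C G G))
   \<and> cell_in C eps G T
   \<comment> \<open>M1\<close>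
   \<and> vc C zeta (wl C G mu) = vc C (wr C mu G) (vc C (wl C T zeta) (wr C zeta T))
   \<comment> \<open>M2\<close>
   \<and> vc C zeta (wl C G eta) = wr C eta G
   \<comment> \<open>M3\<close>
   \<and> vc C mu (wr C eps T) = vc C mu (vc C (wl C T eps) zeta)
   \<comment> \<open>M4\<close>
   \<and> vc C (wr C mu (cmp C G G)) (vc C (wl C T (wr C zeta G))
        (vc C (wl C (cmp C T G) zeta) (wr C delta T)))
       = vc C (wr C mu (cmp C G G)) (vc C (wl C T delta) zeta)
   \<comment> \<open>M5\<close>
   \<and> vc C (wr C mu (cmp C G (cmp C G G))) (vc C (wl C T (wr C delta G)) delta)
       = vc C (wr C mu (cmp C G (cmp C G G))) (vc C (wl C T (wr C zeta (cmp C G G)))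
           (vc C (wl C (cmp C T G) delta) delta))
   \<comment> \<open>M6\<close>
   \<and> vc C (wr C mu G) (vc C (wl C T (wr C eps G)) delta) = wr C eta G
   \<comment> \<open>M7\<close>
   \<and> vc C (wr C mu G) (vc C (wl C T zeta) (vc C (wl C (cmp C T G) eps) delta)) = wr C eta G"

definition mate_zeta :: "('o, 'm, 'c, 'x) two_cat_scheme \<Rightarrow> 'm \<Rightarrow> 'm \<Rightarrow> 'c \<Rightarrow> 'c \<Rightarrow> 'c \<Rightarrow> 'c" where
  "mate_zeta C T G u e lam =
     vc C (wr C e (cmp C T G)) (vc C (wl C G (wr C lam G)) (wl C (cmp C G T) u))"

definition mate_delta :: "('o, 'm, 'c, 'x) two_cat_scheme \<Rightarrow> 'm \<Rightarrow> 'm \<Rightarrow> 'm \<Rightarrow> 'c \<Rightarrow> 'c \<Rightarrow> 'c \<Rightarrow> 'c" where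
  "mate_delta C T G S u e nu =
     vc C (wr C e (cmp C T (cmp C G G)))
       (vc C (wl C G (wr C nu (cmp C G G)))
         (vc C (wl C (cmp C G S) (wr C u G)) (wl C G u)))"

definition mate_eps :: "('o, 'm, 'c, 'x) two_cat_scheme \<Rightarrow> 'm \<Rightarrow> 'm \<Rightarrow> 'c \<Rightarrow> 'c \<Rightarrow> 'c" where
  "mate_eps C T G e sigma = vc C (wr C e T) (wl C G sigma)"

end

theory Submission
  imports Defs
begin

text \<open>Along the adjunction \<open>G \<turnstile> S\<close>, 2-cells \<open>X \<Rightarrow> S Y\<close> correspond bijectively to 2-cells
  \<open>G X \<Rightarrow> Y\<close>, and 2-cells \<open>P S \<Rightarrow> Q\<close> to 2-cells \<open>P \<Rightarrow> Q G\<close>. The mates \<open>\<zeta>\<close>, \<open>\<delta>\<close>, \<open>\<epsilon>\<close> of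
  \<open>\<lambda>\<close>, \<open>\<nu>\<close>, \<open>\<sigma>\<close> are composites of such transpositions, so mateship is a bijection on
  triples of 2-cells. Transposition is compatible with vertical composition and whiskering, and
  sends a composite \<open>\<psi>Z \<circ> X\<phi>\<close> to a composite of the transposes of \<open>\<psi>\<close> and \<open>\<phi>\<close>. Consequently,
  transposing both sides of the wreath axiom (Wi) yields exactly the two sides of the mixed
  opwreath axiom (Mi), and since transposition is injective, (Wi) holds iff (Mi) holds.\<close>

locale endo_two_category =
  fixes C :: "('o, 'm, 'c) two_cat" and A :: 'o
  assumes two_cat: "two_category C" and A_ob: "A \<in> ob C"
begin

abbreviation endoA :: "'m \<Rightarrow> bool" where "endoA X \<equiv> endo C A X"
abbreviation one :: 'm ("\<one>") where "\<one> \<equiv> idm C A"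
abbreviation comp1 (infixr "\<cdot>" 75) where "X \<cdot> Y \<equiv> cmp C X Y"
abbreviation vcomp (infixr "\<bullet>" 55) where "a \<bullet> b \<equiv> vc C a b"
abbreviation whisker_l (infixr "\<triangleright>" 66) where "X \<triangleright> a \<equiv> wl C X a"
abbreviation whisker_r (infixl "\<triangleleft>" 65) where "a \<triangleleft> X \<equiv> wr C a X"
abbreviation id2 where "id2 X \<equiv> idc C X"

definition endo_cell :: "'c \<Rightarrow> bool" where
  "endo_cell a \<longleftrightarrow> a \<in> cell C \<and> endoA (dom2 C a) \<and> endoA (cod2 C a)"

lemma endo_cell_endo [simp]: "endo_cell a \<Longrightarrow> endoA (dom2 C a)" "endo_cell a \<Longrightarrow> endoA (cod2 C a)"
  and endo_cell_cell: "endo_cell a \<Longrightarrow> a \<in> cell C"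
  unfolding endo_cell_def by auto

lemma endo_one [simp]: "endoA \<one>"
  using two_cat A_ob unfolding two_category_def endo_def by (elim conjE, auto)+

lemma endo_comp [simp]: "endoA X \<Longrightarrow> endoA Y \<Longrightarrow> endoA (X \<cdot> Y)"
  using two_cat unfolding two_category_def endo_def by (elim conjE, auto)+

lemma comp_assoc [simp]: "endoA X \<Longrightarrow> endoA Y \<Longrightarrow> endoA Z \<Longrightarrow> (X \<cdot> Y) \<cdot> Z = X \<cdot> Y \<cdot> Z"
  using two_cat unfolding two_category_def endo_def by (elim conjE, auto)+

lemma comp_one_left [simp]: "endoA X \<Longrightarrow> \<one> \<cdot> X = X"
  and comp_one_right [simp]: "endoA X \<Longrightarrow> X \<cdot> \<one> = X"
  using two_cat unfolding two_category_def endo_def by (elim conjE, auto)+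

lemma endo_cell_id [simp]: "endoA X \<Longrightarrow> endo_cell (id2 X)"
  and dom_id [simp]: "endoA X \<Longrightarrow> dom2 C (id2 X) = X"
  and cod_id [simp]: "endoA X \<Longrightarrow> cod2 C (id2 X) = X"
  using two_cat unfolding two_category_def endo_cell_def endo_def by (elim conjE, auto)+

lemma endo_cell_vc [simp]: "endo_cell a \<Longrightarrow> endo_cell b \<Longrightarrow> dom2 C a = cod2 C b \<Longrightarrow> endo_cell (a \<bullet> b)"
  and dom_vc [simp]: "endo_cell a \<Longrightarrow> endo_cell b \<Longrightarrow> dom2 C a = cod2 C b \<Longrightarrow> dom2 C (a \<bullet> b) = dom2 C b"
  and cod_vc [simp]: "endo_cell a \<Longrightarrow> endo_cell b \<Longrightarrow> dom2 C a = cod2 C b \<Longrightarrow> cod2 C (a \<bullet> b) = cod2 C a"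
  using two_cat unfolding two_category_def endo_cell_def by (elim conjE, auto)+

lemma vc_assoc [simp]:
  "endo_cell a \<Longrightarrow> endo_cell b \<Longrightarrow> endo_cell c \<Longrightarrow> dom2 C a = cod2 C b \<Longrightarrow> dom2 C b = cod2 C c
   \<Longrightarrow> (a \<bullet> b) \<bullet> c = a \<bullet> b \<bullet> c"
  using two_cat unfolding two_category_def endo_cell_def by (elim conjE, auto)+

lemma vc_id_left [simp]: "endo_cell a \<Longrightarrow> cod2 C a = X \<Longrightarrow> id2 X \<bullet> a = a"
  and vc_id_right [simp]: "endo_cell a \<Longrightarrow> dom2 C a = X \<Longrightarrow> a \<bullet> id2 X = a"
  using two_cat unfolding two_category_def endo_cell_def by (elim conjE, auto)+

lemma endo_cell_hc: "endo_cell a \<Longrightarrow> endo_cell b \<Longrightarrow> endo_cell (hc C a b)"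
  and dom_hc: "endo_cell a \<Longrightarrow> endo_cell b \<Longrightarrow> dom2 C (hc C a b) = dom2 C a \<cdot> dom2 C b"
  and cod_hc: "endo_cell a \<Longrightarrow> endo_cell b \<Longrightarrow> cod2 C (hc C a b) = cod2 C a \<cdot> cod2 C b"
  using two_cat unfolding two_category_def endo_cell_def endo_def by (elim conjE, auto)+

lemma hc_assoc: "endo_cell a \<Longrightarrow> endo_cell b \<Longrightarrow> endo_cell c \<Longrightarrow> hc C (hc C a b) c = hc C a (hc C b c)"
  using two_cat unfolding two_category_def endo_cell_def endo_def by (elim conjE, auto)+

lemma hc_one_left: "endo_cell a \<Longrightarrow> hc C (id2 \<one>) a = a"
  and hc_one_right: "endo_cell a \<Longrightarrow> hc C a (id2 \<one>) = a"
  using two_cat unfolding two_category_def endo_cell_def endo_def by (elim conjE, auto)+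

lemma hc_id_id: "endoA X \<Longrightarrow> endoA Y \<Longrightarrow> hc C (id2 X) (id2 Y) = id2 (X \<cdot> Y)"
  using two_cat unfolding two_category_def endo_def by (elim conjE, auto)+

lemma interchange:
  "endo_cell a \<Longrightarrow> endo_cell a' \<Longrightarrow> endo_cell b \<Longrightarrow> endo_cell b' \<Longrightarrow>
   dom2 C a = cod2 C a' \<Longrightarrow> dom2 C b = cod2 C b' \<Longrightarrow>
   hc C (a \<bullet> a') (b \<bullet> b') = hc C a b \<bullet> hc C a' b'"
  using two_cat unfolding two_category_def endo_cell_def endo_def by (elim conjE, auto)+

lemma endo_cell_wl [simp]: "endoA X \<Longrightarrow> endo_cell a \<Longrightarrow> endo_cell (X \<triangleright> a)"
  and dom_wl [simp]: "endoA X \<Longrightarrow> endo_cell a \<Longrightarrow> dom2 C (X \<triangleright> a) = X \<cdot> dom2 C a"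
  and cod_wl [simp]: "endoA X \<Longrightarrow> endo_cell a \<Longrightarrow> cod2 C (X \<triangleright> a) = X \<cdot> cod2 C a"
  unfolding wl_def by (simp_all add: endo_cell_hc dom_hc cod_hc)

lemma endo_cell_wr [simp]: "endoA X \<Longrightarrow> endo_cell a \<Longrightarrow> endo_cell (a \<triangleleft> X)"
  and dom_wr [simp]: "endoA X \<Longrightarrow> endo_cell a \<Longrightarrow> dom2 C (a \<triangleleft> X) = dom2 C a \<cdot> X"
  and cod_wr [simp]: "endoA X \<Longrightarrow> endo_cell a \<Longrightarrow> cod2 C (a \<triangleleft> X) = cod2 C a \<cdot> X"
  unfolding wr_def by (simp_all add: endo_cell_hc dom_hc cod_hc)

lemma wl_vc [simp]: "endoA X \<Longrightarrow> endo_cell a \<Longrightarrow> endo_cell b \<Longrightarrow> dom2 C a = cod2 C b \<Longrightarrow>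
   X \<triangleright> (a \<bullet> b) = X \<triangleright> a \<bullet> X \<triangleright> b"
  unfolding wl_def using interchange[of "id2 X" "id2 X" a b] by simp

lemma wr_vc [simp]: "endoA X \<Longrightarrow> endo_cell a \<Longrightarrow> endo_cell b \<Longrightarrow> dom2 C a = cod2 C b \<Longrightarrow>
   (a \<bullet> b) \<triangleleft> X = a \<triangleleft> X \<bullet> b \<triangleleft> X"
  unfolding wr_def using interchange[of a b "id2 X" "id2 X"] by simp

lemma wl_wl [simp]: "endoA X \<Longrightarrow> endoA Y \<Longrightarrow> endo_cell a \<Longrightarrow> X \<triangleright> Y \<triangleright> a = (X \<cdot> Y) \<triangleright> a"
  unfolding wl_def by (simp add: hc_assoc[symmetric] hc_id_id)

lemma wr_wr [simp]: "endoA X \<Longrightarrow> endoA Y \<Longrightarrow> endo_cell a \<Longrightarrow> a \<triangleleft> X \<triangleleft> Y = a \<triangleleft> (X \<cdot> Y)"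
  unfolding wr_def by (simp add: hc_assoc hc_id_id)

lemma wr_wl [simp]: "endoA X \<Longrightarrow> endoA Y \<Longrightarrow> endo_cell a \<Longrightarrow> (X \<triangleright> a) \<triangleleft> Y = X \<triangleright> (a \<triangleleft> Y)"
  unfolding wr_def wl_def by (simp add: hc_assoc)

lemma wl_one [simp]: "endo_cell a \<Longrightarrow> \<one> \<triangleright> a = a"
  and wr_one [simp]: "endo_cell a \<Longrightarrow> a \<triangleleft> \<one> = a"
  unfolding wl_def wr_def by (simp_all add: hc_one_left hc_one_right)

lemma wl_id [simp]: "endoA X \<Longrightarrow> endoA Y \<Longrightarrow> X \<triangleright> id2 Y = id2 (X \<cdot> Y)"
  and wr_id [simp]: "endoA X \<Longrightarrow> endoA Y \<Longrightarrow> id2 Y \<triangleleft> X = id2 (Y \<cdot> X)"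
  unfolding wl_def wr_def by (simp_all add: hc_id_id)

lemma whisker_exchange: "endo_cell a \<Longrightarrow> endo_cell b \<Longrightarrow>
  a \<triangleleft> cod2 C b \<bullet> dom2 C a \<triangleright> b = cod2 C a \<triangleright> b \<bullet> a \<triangleleft> dom2 C b"
proof -
  assume a: "endo_cell a" and b: "endo_cell b"
  have "hc C a b = a \<triangleleft> cod2 C b \<bullet> dom2 C a \<triangleright> b"
    unfolding wl_def wr_def using a b interchange[of a "id2 (dom2 C a)" "id2 (cod2 C b)" b] by simp
  moreover have "hc C a b = cod2 C a \<triangleright> b \<bullet> a \<triangleleft> dom2 C b"
    unfolding wl_def wr_def using a b interchange[of "id2 (cod2 C a)" a b "id2 (dom2 C b)"] by simp
  ultimately show ?thesis by simp
qed

lemma vc_eq_extend: "x \<bullet> y = z \<Longrightarrow> endo_cell x \<Longrightarrow> endo_cell y \<Longrightarrow> endo_cell r \<Longrightarrow>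
   dom2 C x = cod2 C y \<Longrightarrow> cod2 C r = dom2 C y \<Longrightarrow> x \<bullet> y \<bullet> r = z \<bullet> r"
  by (metis vc_assoc)

lemma whisker_exchange_whiskered: "endoA X \<Longrightarrow> endoA Y \<Longrightarrow> endo_cell a \<Longrightarrow> endo_cell b \<Longrightarrow>
  X \<triangleright> (a \<triangleleft> cod2 C b \<triangleleft> Y) \<bullet> X \<triangleright> (dom2 C a \<triangleright> b \<triangleleft> Y)
  = X \<triangleright> (cod2 C a \<triangleright> b \<triangleleft> Y) \<bullet> X \<triangleright> (a \<triangleleft> dom2 C b \<triangleleft> Y)"
proof -
  assume *: "endoA X" "endoA Y" "endo_cell a" "endo_cell b"
  then have "X \<triangleright> ((a \<triangleleft> cod2 C b \<bullet> dom2 C a \<triangleright> b) \<triangleleft> Y) = X \<triangleright> ((cod2 C a \<triangleright> b \<bullet> a \<triangleleft> dom2 C b) \<triangleleft> Y)"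
    using whisker_exchange by simp
  then show ?thesis using * by simp
qed

end

locale endo_adjunction = endo_two_category +
  fixes G S u e
  assumes adj: "adjunction C A G S u e"
begin

lemma endo_G [simp]: "endoA G" and endo_S [simp]: "endoA S"
  using adj unfolding adjunction_def by auto

lemma unit_type [simp]: "endo_cell u" "dom2 C u = \<one>" "cod2 C u = S \<cdot> G"
  and counit_type [simp]: "endo_cell e" "dom2 C e = G \<cdot> S" "cod2 C e = \<one>"
  using adj unfolding adjunction_def cell_in_def endo_cell_def by auto

lemma triangle_G: "e \<triangleleft> G \<bullet> G \<triangleright> u = id2 G"
  and triangle_S: "S \<triangleright> e \<bullet> u \<triangleleft> S = id2 S"
  using adj unfolding adjunction_def by auto

lemma triangle_G_whiskered: "endoA X \<Longrightarrow> endoA Y \<Longrightarrow>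
  X \<triangleright> (e \<triangleleft> G \<cdot> Y) \<bullet> (X \<cdot> G) \<triangleright> (u \<triangleleft> Y) = id2 (X \<cdot> G \<cdot> Y)"
proof -
  assume "endoA X" "endoA Y"
  then have "X \<triangleright> ((e \<triangleleft> G \<bullet> G \<triangleright> u) \<triangleleft> Y) = id2 (X \<cdot> G \<cdot> Y)" by (simp add: triangle_G)
  then show ?thesis using \<open>endoA X\<close> \<open>endoA Y\<close> by simp
qed

lemma triangle_S_whiskered: "endoA X \<Longrightarrow> endoA Y \<Longrightarrow>
  (X \<cdot> S) \<triangleright> (e \<triangleleft> Y) \<bullet> X \<triangleright> (u \<triangleleft> S \<cdot> Y) = id2 (X \<cdot> S \<cdot> Y)"
proof -
  assume "endoA X" "endoA Y"
  then have "X \<triangleright> ((S \<triangleright> e \<bullet> u \<triangleleft> S) \<triangleleft> Y) = id2 (X \<cdot> S \<cdot> Y)" by (simp add: triangle_S)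
  then show ?thesis using \<open>endoA X\<close> \<open>endoA Y\<close> by simp
qed

text \<open>The hom-set bijections of the adjunctions \<open>G \<cdot> - \<turnstile> S \<cdot> -\<close> (\<open>mate_l\<close>) and
  \<open>- \<cdot> S \<turnstile> - \<cdot> G\<close> (\<open>mate_r\<close>) induced by \<open>G \<turnstile> S\<close>:
  \<open>mate_l Y\<close> sends \<open>X \<Rightarrow> S \<cdot> Y\<close> to \<open>G \<cdot> X \<Rightarrow> Y\<close>, and \<open>mate_r P\<close> sends \<open>P \<cdot> S \<Rightarrow> Q\<close> to \<open>P \<Rightarrow> Q \<cdot> G\<close>.\<close>

definition mate_l where "mate_l Y \<phi> = e \<triangleleft> Y \<bullet> G \<triangleright> \<phi>"
definition mate_l_inv where "mate_l_inv X \<psi> = S \<triangleright> \<psi> \<bullet> u \<triangleleft> X"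
definition mate_r where "mate_r P \<psi> = \<psi> \<triangleleft> G \<bullet> P \<triangleright> u"
definition mate_r_inv where "mate_r_inv Q \<chi> = Q \<triangleright> e \<bullet> \<chi> \<triangleleft> S"

lemma endo_cell_mate_l [simp]: "endo_cell \<phi> \<Longrightarrow> endoA Y \<Longrightarrow> cod2 C \<phi> = S \<cdot> Y \<Longrightarrow> endo_cell (mate_l Y \<phi>)"
  and dom_mate_l [simp]: "endo_cell \<phi> \<Longrightarrow> endoA Y \<Longrightarrow> cod2 C \<phi> = S \<cdot> Y \<Longrightarrow> dom2 C (mate_l Y \<phi>) = G \<cdot> dom2 C \<phi>"
  and cod_mate_l [simp]: "endo_cell \<phi> \<Longrightarrow> endoA Y \<Longrightarrow> cod2 C \<phi> = S \<cdot> Y \<Longrightarrow> cod2 C (mate_l Y \<phi>) = Y"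
  unfolding mate_l_def by simp_all

lemma endo_cell_mate_r [simp]: "endo_cell \<psi> \<Longrightarrow> endoA P \<Longrightarrow> dom2 C \<psi> = P \<cdot> S \<Longrightarrow> endo_cell (mate_r P \<psi>)"
  and dom_mate_r [simp]: "endo_cell \<psi> \<Longrightarrow> endoA P \<Longrightarrow> dom2 C \<psi> = P \<cdot> S \<Longrightarrow> dom2 C (mate_r P \<psi>) = P"
  and cod_mate_r [simp]: "endo_cell \<psi> \<Longrightarrow> endoA P \<Longrightarrow> dom2 C \<psi> = P \<cdot> S \<Longrightarrow> cod2 C (mate_r P \<psi>) = cod2 C \<psi> \<cdot> G"
  unfolding mate_r_def by simp_all

lemma endo_cell_mate_l_inv [simp]: "endo_cell \<psi> \<Longrightarrow> endoA X \<Longrightarrow> dom2 C \<psi> = G \<cdot> X \<Longrightarrow> endo_cell (mate_l_inv X \<psi>)"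
  and dom_mate_l_inv [simp]: "endo_cell \<psi> \<Longrightarrow> endoA X \<Longrightarrow> dom2 C \<psi> = G \<cdot> X \<Longrightarrow> dom2 C (mate_l_inv X \<psi>) = X"
  and cod_mate_l_inv [simp]: "endo_cell \<psi> \<Longrightarrow> endoA X \<Longrightarrow> dom2 C \<psi> = G \<cdot> X \<Longrightarrow> cod2 C (mate_l_inv X \<psi>) = S \<cdot> cod2 C \<psi>"
  unfolding mate_l_inv_def by simp_all

lemma endo_cell_mate_r_inv [simp]: "endo_cell \<chi> \<Longrightarrow> endoA Q \<Longrightarrow> cod2 C \<chi> = Q \<cdot> G \<Longrightarrow> endo_cell (mate_r_inv Q \<chi>)"
  and dom_mate_r_inv [simp]: "endo_cell \<chi> \<Longrightarrow> endoA Q \<Longrightarrow> cod2 C \<chi> = Q \<cdot> G \<Longrightarrow> dom2 C (mate_r_inv Q \<chi>) = dom2 C \<chi> \<cdot> S"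
  and cod_mate_r_inv [simp]: "endo_cell \<chi> \<Longrightarrow> endoA Q \<Longrightarrow> cod2 C \<chi> = Q \<cdot> G \<Longrightarrow> cod2 C (mate_r_inv Q \<chi>) = Q"
  unfolding mate_r_inv_def by simp_all

lemma mate_l_inv_mate_l:
  "endo_cell \<phi> \<Longrightarrow> cod2 C \<phi> = S \<cdot> Y \<Longrightarrow> endoA Y \<Longrightarrow> mate_l_inv (dom2 C \<phi>) (mate_l Y \<phi>) = \<phi>"
  unfolding mate_l_inv_def mate_l_def
  using whisker_exchange[of u \<phi>, symmetric] triangle_S_whiskered[of \<one> Y]
    vc_eq_extend[OF triangle_S_whiskered[of \<one> Y]]
  by simp

lemma mate_l_mate_l_inv:
  "endo_cell \<psi> \<Longrightarrow> dom2 C \<psi> = G \<cdot> X \<Longrightarrow> endoA X \<Longrightarrow> mate_l (cod2 C \<psi>) (mate_l_inv X \<psi>) = \<psi>"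
  unfolding mate_l_inv_def mate_l_def
  using whisker_exchange[of e \<psi>] vc_eq_extend[OF whisker_exchange[of e \<psi>]]
    triangle_G_whiskered[of \<one> X] vc_eq_extend[OF triangle_G_whiskered[of \<one> X]]
  by simp

lemma mate_r_mate_r_inv:
  "endo_cell \<chi> \<Longrightarrow> cod2 C \<chi> = Q \<cdot> G \<Longrightarrow> endoA Q \<Longrightarrow> mate_r (dom2 C \<chi>) (mate_r_inv Q \<chi>) = \<chi>"
  unfolding mate_r_def mate_r_inv_def
  using whisker_exchange[of \<chi> u] vc_eq_extend[OF whisker_exchange[of \<chi> u]]
    triangle_G_whiskered[of Q \<one>] vc_eq_extend[OF triangle_G_whiskered[of Q \<one>]]
  by simp

lemma mate_r_inv_mate_r:
  "endo_cell \<psi> \<Longrightarrow> dom2 C \<psi> = P \<cdot> S \<Longrightarrow> endoA P \<Longrightarrow> mate_r_inv (cod2 C \<psi>) (mate_r P \<psi>) = \<psi>"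
  unfolding mate_r_def mate_r_inv_def
  using whisker_exchange[of \<psi> e, symmetric] vc_eq_extend[OF whisker_exchange[of \<psi> e, symmetric]]
    triangle_S_whiskered[of P \<one>] vc_eq_extend[OF triangle_S_whiskered[of P \<one>]]
  by simp

lemma mate_l_eq_iff:
  "endo_cell a \<Longrightarrow> endo_cell b \<Longrightarrow> dom2 C a = dom2 C b \<Longrightarrow> cod2 C a = S \<cdot> Y \<Longrightarrow> cod2 C b = S \<cdot> Y \<Longrightarrow>
   endoA Y \<Longrightarrow> mate_l Y a = mate_l Y b \<longleftrightarrow> a = b"
  by (metis mate_l_inv_mate_l)

lemma mate_r_eq_iff:
  "endo_cell a \<Longrightarrow> endo_cell b \<Longrightarrow> dom2 C a = P \<cdot> S \<Longrightarrow> dom2 C b = P \<cdot> S \<Longrightarrow> cod2 C a = cod2 C b \<Longrightarrow>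
   endoA P \<Longrightarrow> mate_r P a = mate_r P b \<longleftrightarrow> a = b"
  by (metis mate_r_inv_mate_r)

lemma mate_l_vc_wl: "endo_cell \<alpha> \<Longrightarrow> endo_cell \<phi> \<Longrightarrow> cod2 C \<phi> = S \<cdot> dom2 C \<alpha> \<Longrightarrow>
   mate_l (cod2 C \<alpha>) (S \<triangleright> \<alpha> \<bullet> \<phi>) = \<alpha> \<bullet> mate_l (dom2 C \<alpha>) \<phi>"
  unfolding mate_l_def using whisker_exchange[of e \<alpha>] vc_eq_extend[OF whisker_exchange[of e \<alpha>]] by simp

lemma mate_l_vc: "endo_cell \<phi> \<Longrightarrow> endo_cell \<beta> \<Longrightarrow> dom2 C \<phi> = cod2 C \<beta> \<Longrightarrow> endoA Y \<Longrightarrow> cod2 C \<phi> = S \<cdot> Y \<Longrightarrow>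
   mate_l Y (\<phi> \<bullet> \<beta>) = mate_l Y \<phi> \<bullet> G \<triangleright> \<beta>"
  unfolding mate_l_def by simp

lemma mate_l_wr: "endo_cell \<phi> \<Longrightarrow> endoA Y \<Longrightarrow> endoA Z \<Longrightarrow> cod2 C \<phi> = S \<cdot> Y \<Longrightarrow>
   mate_l (Y \<cdot> Z) (\<phi> \<triangleleft> Z) = mate_l Y \<phi> \<triangleleft> Z"
  unfolding mate_l_def by simp

lemma mate_l_id: "mate_l \<one> (id2 S) = e"
  unfolding mate_l_def by simp

lemma mate_r_vc: "endo_cell \<psi> \<Longrightarrow> endo_cell \<beta> \<Longrightarrow> dom2 C \<beta> = cod2 C \<psi> \<Longrightarrow> endoA P \<Longrightarrow> dom2 C \<psi> = P \<cdot> S \<Longrightarrow>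
   mate_r P (\<beta> \<bullet> \<psi>) = \<beta> \<triangleleft> G \<bullet> mate_r P \<psi>"
  unfolding mate_r_def by simp

lemma mate_r_vc_wr: "endo_cell \<psi> \<Longrightarrow> endo_cell \<alpha> \<Longrightarrow> dom2 C \<psi> = cod2 C \<alpha> \<cdot> S \<Longrightarrow>
   mate_r (dom2 C \<alpha>) (\<psi> \<bullet> \<alpha> \<triangleleft> S) = mate_r (cod2 C \<alpha>) \<psi> \<bullet> \<alpha>"
  unfolding mate_r_def using whisker_exchange[of \<alpha> u] by simp

lemma mate_r_wl: "endo_cell \<psi> \<Longrightarrow> endoA X \<Longrightarrow> endoA P \<Longrightarrow> dom2 C \<psi> = P \<cdot> S \<Longrightarrow>
   mate_r (X \<cdot> P) (X \<triangleright> \<psi>) = X \<triangleright> mate_r P \<psi>"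
  unfolding mate_r_def by simp

lemma mate_r_counit: "mate_r G e = id2 G"
  unfolding mate_r_def using triangle_G by simp

lemma mate_l_whiskered_comp:
  assumes "endo_cell \<psi>" "endo_cell \<phi>" "endoA X" "endoA Y" "endoA Z"
    and "dom2 C \<psi> = X \<cdot> S" "cod2 C \<psi> = S \<cdot> Y" "cod2 C \<phi> = S \<cdot> Z"
  shows "mate_l (Y \<cdot> Z) (\<psi> \<triangleleft> Z \<bullet> X \<triangleright> \<phi>)
    = Y \<triangleright> mate_l Z \<phi> \<bullet> mate_r (G \<cdot> X) (mate_l Y \<psi>) \<triangleleft> dom2 C \<phi>"
proof -
  let ?\<chi> = "mate_r (G \<cdot> X) (mate_l Y \<psi>)"
  have \<chi>: "mate_l Y \<psi> = Y \<triangleright> e \<bullet> ?\<chi> \<triangleleft> S"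
    using mate_r_inv_mate_r[of "mate_l Y \<psi>" "G \<cdot> X"] assms by (simp add: mate_r_inv_def)
  have "mate_l (Y \<cdot> Z) (\<psi> \<triangleleft> Z \<bullet> X \<triangleright> \<phi>) = mate_l Y \<psi> \<triangleleft> Z \<bullet> (G \<cdot> X) \<triangleright> \<phi>"
    using assms unfolding mate_l_def by simp
  also have "\<dots> = (Y \<triangleright> e \<bullet> ?\<chi> \<triangleleft> S) \<triangleleft> Z \<bullet> (G \<cdot> X) \<triangleright> \<phi>"
    by (simp only: \<chi>[symmetric])
  also have "\<dots> = Y \<triangleright> mate_l Z \<phi> \<bullet> ?\<chi> \<triangleleft> dom2 C \<phi>"
    unfolding mate_l_def[of Z \<phi>] using assms whisker_exchange[of ?\<chi> \<phi>] by simp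
  finally show ?thesis .
qed

lemma mate_r_whiskered_comp:
  assumes "endo_cell \<alpha>" "endo_cell \<phi>" "endoA X" "endoA Z" "endoA W"
    and "dom2 C \<alpha> = X \<cdot> S" "dom2 C \<phi> = W \<cdot> S" "cod2 C \<phi> = S \<cdot> Z"
  shows "mate_r (X \<cdot> W) (\<alpha> \<triangleleft> Z \<bullet> X \<triangleright> \<phi>)
    = cod2 C \<alpha> \<triangleright> mate_r (G \<cdot> W) (mate_l Z \<phi>) \<bullet> mate_r X \<alpha> \<triangleleft> W"
  unfolding mate_l_def mate_r_def
  using assms
    whisker_exchange[of \<alpha> "(G \<cdot> W) \<triangleright> u", symmetric]
    vc_eq_extend[OF whisker_exchange[of \<alpha> "(G \<cdot> W) \<triangleright> u", symmetric]]
    whisker_exchange[of \<alpha> "G \<triangleright> (\<phi> \<triangleleft> G)", symmetric]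
    vc_eq_extend[OF whisker_exchange[of \<alpha> "G \<triangleright> (\<phi> \<triangleleft> G)", symmetric]]
    whisker_exchange[of \<alpha> "e \<triangleleft> (Z \<cdot> G)", symmetric]
    vc_eq_extend[OF whisker_exchange[of \<alpha> "e \<triangleleft> (Z \<cdot> G)", symmetric]]
    whisker_exchange_whiskered[of X \<one> u "W \<triangleright> u", symmetric]
    whisker_exchange_whiskered[of X \<one> u "\<phi> \<triangleleft> G", symmetric]
    vc_eq_extend[OF whisker_exchange_whiskered[of X \<one> u "\<phi> \<triangleleft> G", symmetric]]
    triangle_S_whiskered[of X "Z \<cdot> G"] vc_eq_extend[OF triangle_S_whiskered[of X "Z \<cdot> G"]]
  by simp

lemma whiskered_comp_eq_mates:
  assumes "endo_cell \<alpha>" "endo_cell \<sigma>" "endoA X" "endoA Z"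
    and "dom2 C \<alpha> = X \<cdot> S" "dom2 C \<sigma> = \<one>" "cod2 C \<sigma> = S \<cdot> Z"
  shows "cod2 C \<alpha> \<triangleright> mate_l Z \<sigma> \<bullet> mate_r X \<alpha> = \<alpha> \<triangleleft> Z \<bullet> X \<triangleright> \<sigma>"
  unfolding mate_l_def mate_r_def
  using assms
    whisker_exchange[of \<alpha> "G \<triangleright> \<sigma>", symmetric] vc_eq_extend[OF whisker_exchange[of \<alpha> "G \<triangleright> \<sigma>", symmetric]]
    whisker_exchange[of \<alpha> "e \<triangleleft> Z", symmetric] vc_eq_extend[OF whisker_exchange[of \<alpha> "e \<triangleleft> Z", symmetric]]
    whisker_exchange_whiskered[of X \<one> u \<sigma>, symmetric]
    triangle_S_whiskered[of X Z] vc_eq_extend[OF triangle_S_whiskered[of X Z]]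
  by simp

end

locale monad_adjunction = endo_adjunction +
  fixes T mu eta
  assumes mon: "monad C A T mu eta"
begin

lemma endo_T [simp]: "endoA T"
  using mon unfolding monad_def by auto

lemma mu_type [simp]: "endo_cell mu" "dom2 C mu = T \<cdot> T" "cod2 C mu = T"
  and eta_type [simp]: "endo_cell eta" "dom2 C eta = \<one>" "cod2 C eta = T"
  using mon unfolding monad_def cell_in_def endo_cell_def by auto

end

locale wreath_cells = monad_adjunction +
  fixes nu sigma lam
  assumes nu_type [simp]: "endo_cell nu" "dom2 C nu = S \<cdot> S" "cod2 C nu = S \<cdot> T"
    and sigma_type [simp]: "endo_cell sigma" "dom2 C sigma = \<one>" "cod2 C sigma = S \<cdot> T"
    and lam_type [simp]: "endo_cell lam" "dom2 C lam = T \<cdot> S" "cod2 C lam = S \<cdot> T"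
begin

abbreviation "lam\<^sub>T \<equiv> mate_l T lam"
abbreviation "nu\<^sub>T \<equiv> mate_l T nu"
abbreviation "\<zeta> \<equiv> mate_r (G \<cdot> T) lam\<^sub>T"
abbreviation "\<delta>' \<equiv> mate_r (G \<cdot> S) nu\<^sub>T"
abbreviation "\<delta> \<equiv> mate_r G \<delta>'"
abbreviation "\<epsilon> \<equiv> mate_l T sigma"

lemma mate_zeta_eq: "mate_zeta C T G u e lam = \<zeta>"
  unfolding mate_zeta_def mate_r_def mate_l_def by simp

lemma mate_delta_eq: "mate_delta C T G S u e nu = \<delta>"
  unfolding mate_delta_def mate_r_def mate_l_def by simp

lemma mate_eps_eq: "mate_eps C T G e sigma = \<epsilon>"
  unfolding mate_eps_def mate_r_def mate_l_def by simp

lemma mate_W1_lhs: "mate_r (G \<cdot> T \<cdot> T) (mate_l T (lam \<bullet> mu \<triangleleft> S)) = \<zeta> \<bullet> G \<triangleright> mu"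
  using mate_l_vc[of lam "mu \<triangleleft> S" T] mate_r_vc_wr[of lam\<^sub>T "G \<triangleright> mu"] by simp

lemma mate_W1_rhs:
  "mate_r (G \<cdot> T \<cdot> T) (mate_l T (S \<triangleright> mu \<bullet> lam \<triangleleft> T \<bullet> T \<triangleright> lam)) = mu \<triangleleft> G \<bullet> T \<triangleright> \<zeta> \<bullet> \<zeta> \<triangleleft> T"
  using mate_l_vc_wl[of mu "lam \<triangleleft> T \<bullet> T \<triangleright> lam"] mate_l_whiskered_comp[of lam lam T T T]
    mate_r_vc[of "T \<triangleright> lam\<^sub>T \<bullet> \<zeta> \<triangleleft> T \<cdot> S" mu "G \<cdot> T \<cdot> T"]
    mate_r_vc_wr[of "T \<triangleright> lam\<^sub>T" "\<zeta> \<triangleleft> T"] mate_r_wl[of lam\<^sub>T T "G \<cdot> T"]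
  by simp

lemma mate_W2_lhs: "mate_r G (mate_l T (lam \<bullet> eta \<triangleleft> S)) = \<zeta> \<bullet> G \<triangleright> eta"
  using mate_l_vc[of lam "eta \<triangleleft> S" T] mate_r_vc_wr[of lam\<^sub>T "G \<triangleright> eta"] by simp

lemma mate_W2_rhs: "mate_r G (mate_l T (S \<triangleright> eta)) = eta \<triangleleft> G"
  using mate_l_vc_wl[of eta "id2 S"] mate_l_id mate_r_vc[of e eta G] mate_r_counit by simp

lemma mate_W3_lhs: "mate_l T (S \<triangleright> mu \<bullet> lam \<triangleleft> T \<bullet> T \<triangleright> sigma) = mu \<bullet> T \<triangleright> \<epsilon> \<bullet> \<zeta>"
  using mate_l_vc_wl[of mu "lam \<triangleleft> T \<bullet> T \<triangleright> sigma"] mate_l_whiskered_comp[of lam sigma T T T] by simp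

lemma mate_W3_rhs: "mate_l T (S \<triangleright> mu \<bullet> sigma \<triangleleft> T) = mu \<bullet> \<epsilon> \<triangleleft> T"
  using mate_l_vc_wl[of mu "sigma \<triangleleft> T"] mate_l_wr[of sigma T T] by simp

lemma mate_W4_lhs:
  "mate_r (G \<cdot> T) (mate_r (G \<cdot> T \<cdot> S) (mate_l T (S \<triangleright> mu \<bullet> nu \<triangleleft> T \<bullet> S \<triangleright> lam \<bullet> lam \<triangleleft> S)))
   = mu \<triangleleft> G \<cdot> G \<bullet> T \<triangleright> (\<zeta> \<triangleleft> G) \<bullet> (T \<cdot> G) \<triangleright> \<zeta> \<bullet> \<delta> \<triangleleft> T"
  using mate_l_vc_wl[of mu "nu \<triangleleft> T \<bullet> S \<triangleright> lam \<bullet> lam \<triangleleft> S"]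
    mate_l_vc[of "nu \<triangleleft> T \<bullet> S \<triangleright> lam" "lam \<triangleleft> S" "T \<cdot> T"] mate_l_whiskered_comp[of nu lam S T T]
    mate_r_vc[of "T \<triangleright> lam\<^sub>T \<bullet> \<delta>' \<triangleleft> T \<cdot> S \<bullet> G \<triangleright> (lam \<triangleleft> S)" mu "G \<cdot> T \<cdot> S"]
    mate_r_vc_wr[of "T \<triangleright> lam\<^sub>T \<bullet> \<delta>' \<triangleleft> T \<cdot> S" "G \<triangleright> lam"]
    mate_r_vc_wr[of "T \<triangleright> lam\<^sub>T" "\<delta>' \<triangleleft> T"] mate_r_wl[of lam\<^sub>T T "G \<cdot> T"]
    mate_r_vc[of "T \<triangleright> \<zeta> \<bullet> \<delta>' \<triangleleft> T \<bullet> G \<triangleright> lam" "mu \<triangleleft> G" "G \<cdot> T"]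
    mate_r_vc[of "\<delta>' \<triangleleft> T \<bullet> G \<triangleright> lam" "T \<triangleright> \<zeta>" "G \<cdot> T"]
    mate_r_whiskered_comp[of \<delta>' lam G T T]
  by simp

lemma mate_W4_rhs:
  "mate_r (G \<cdot> T) (mate_r (G \<cdot> T \<cdot> S) (mate_l T (S \<triangleright> mu \<bullet> lam \<triangleleft> T \<bullet> T \<triangleright> nu)))
   = mu \<triangleleft> G \<cdot> G \<bullet> T \<triangleright> \<delta> \<bullet> \<zeta>"
  using mate_l_vc_wl[of mu "lam \<triangleleft> T \<bullet> T \<triangleright> nu"] mate_l_whiskered_comp[of lam nu T T T]
    mate_r_vc[of "T \<triangleright> nu\<^sub>T \<bullet> \<zeta> \<triangleleft> S \<cdot> S" mu "G \<cdot> T \<cdot> S"]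
    mate_r_vc_wr[of "T \<triangleright> nu\<^sub>T" "\<zeta> \<triangleleft> S"] mate_r_wl[of nu\<^sub>T T "G \<cdot> S"]
    mate_r_vc[of "T \<triangleright> \<delta>' \<bullet> \<zeta> \<triangleleft> S" "mu \<triangleleft> G" "G \<cdot> T"]
    mate_r_vc_wr[of "T \<triangleright> \<delta>'" \<zeta>] mate_r_wl[of \<delta>' T G]
  by simp

lemma mate_W5_lhs:
  "mate_r G (mate_r (G \<cdot> S) (mate_r (G \<cdot> S \<cdot> S) (mate_l T (S \<triangleright> mu \<bullet> nu \<triangleleft> T \<bullet> S \<triangleright> nu))))
   = mu \<triangleleft> G \<cdot> G \<cdot> G \<bullet> T \<triangleright> (\<delta> \<triangleleft> G) \<bullet> \<delta>"
  using mate_l_vc_wl[of mu "nu \<triangleleft> T \<bullet> S \<triangleright> nu"] mate_l_whiskered_comp[of nu nu S T T]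
    mate_r_vc[of "T \<triangleright> nu\<^sub>T \<bullet> \<delta>' \<triangleleft> S \<cdot> S" mu "G \<cdot> S \<cdot> S"]
    mate_r_vc_wr[of "T \<triangleright> nu\<^sub>T" "\<delta>' \<triangleleft> S"] mate_r_wl[of nu\<^sub>T T "G \<cdot> S"]
    mate_r_vc[of "T \<triangleright> \<delta>' \<bullet> \<delta>' \<triangleleft> S" "mu \<triangleleft> G" "G \<cdot> S"]
    mate_r_vc_wr[of "T \<triangleright> \<delta>'" \<delta>'] mate_r_wl[of \<delta>' T G]
    mate_r_vc[of "T \<triangleright> \<delta> \<bullet> \<delta>'" "mu \<triangleleft> G \<cdot> G" G] mate_r_vc[of \<delta>' "T \<triangleright> \<delta>" G]
  by simp

lemma mate_W5_rhs:
  "mate_r G (mate_r (G \<cdot> S) (mate_r (G \<cdot> S \<cdot> S) (mate_l T (S \<triangleright> mu \<bullet> nu \<triangleleft> T \<bullet> S \<triangleright> lam \<bullet> nu \<triangleleft> S))))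
   = mu \<triangleleft> G \<cdot> G \<cdot> G \<bullet> T \<triangleright> (\<zeta> \<triangleleft> G \<cdot> G) \<bullet> (T \<cdot> G) \<triangleright> \<delta> \<bullet> \<delta>"
  using mate_l_vc_wl[of mu "nu \<triangleleft> T \<bullet> S \<triangleright> lam \<bullet> nu \<triangleleft> S"]
    mate_l_vc[of "nu \<triangleleft> T \<bullet> S \<triangleright> lam" "nu \<triangleleft> S" "T \<cdot> T"] mate_l_whiskered_comp[of nu lam S T T]
    mate_r_vc[of "T \<triangleright> lam\<^sub>T \<bullet> \<delta>' \<triangleleft> T \<cdot> S \<bullet> G \<triangleright> (nu \<triangleleft> S)" mu "G \<cdot> S \<cdot> S"]
    mate_r_vc_wr[of "T \<triangleright> lam\<^sub>T \<bullet> \<delta>' \<triangleleft> T \<cdot> S" "G \<triangleright> nu"]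
    mate_r_vc_wr[of "T \<triangleright> lam\<^sub>T" "\<delta>' \<triangleleft> T"] mate_r_wl[of lam\<^sub>T T "G \<cdot> T"]
    mate_r_vc[of "T \<triangleright> \<zeta> \<bullet> \<delta>' \<triangleleft> T \<bullet> G \<triangleright> nu" "mu \<triangleleft> G" "G \<cdot> S"]
    mate_r_vc[of "\<delta>' \<triangleleft> T \<bullet> G \<triangleright> nu" "T \<triangleright> \<zeta>" "G \<cdot> S"]
    mate_r_whiskered_comp[of \<delta>' nu G T S]
    mate_r_vc[of "T \<triangleright> (\<zeta> \<triangleleft> G) \<bullet> (T \<cdot> G) \<triangleright> \<delta>' \<bullet> \<delta> \<triangleleft> S" "mu \<triangleleft> G \<cdot> G" G]
    mate_r_vc[of "(T \<cdot> G) \<triangleright> \<delta>' \<bullet> \<delta> \<triangleleft> S" "T \<triangleright> (\<zeta> \<triangleleft> G)" G]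
    mate_r_vc_wr[of "(T \<cdot> G) \<triangleright> \<delta>'" \<delta>] mate_r_wl[of \<delta>' "T \<cdot> G" G]
  by simp

lemma mate_W6_lhs:
  "mate_r G (mate_l T (S \<triangleright> mu \<bullet> nu \<triangleleft> T \<bullet> S \<triangleright> sigma)) = mu \<triangleleft> G \<bullet> T \<triangleright> (\<epsilon> \<triangleleft> G) \<bullet> \<delta>"
  using mate_l_vc_wl[of mu "nu \<triangleleft> T \<bullet> S \<triangleright> sigma"] mate_l_whiskered_comp[of nu sigma S T T]
    mate_r_vc[of "T \<triangleright> \<epsilon> \<bullet> \<delta>'" mu G] mate_r_vc[of \<delta>' "T \<triangleright> \<epsilon>" G]
  by simp

lemma mate_W7_lhs:
  "mate_r G (mate_l T (S \<triangleright> mu \<bullet> nu \<triangleleft> T \<bullet> S \<triangleright> lam \<bullet> sigma \<triangleleft> S))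
   = mu \<triangleleft> G \<bullet> T \<triangleright> \<zeta> \<bullet> (T \<cdot> G) \<triangleright> \<epsilon> \<bullet> \<delta>"
  using mate_l_vc_wl[of mu "nu \<triangleleft> T \<bullet> S \<triangleright> lam \<bullet> sigma \<triangleleft> S"]
    mate_l_vc[of "nu \<triangleleft> T \<bullet> S \<triangleright> lam" "sigma \<triangleleft> S" "T \<cdot> T"] mate_l_whiskered_comp[of nu lam S T T]
    mate_r_vc[of "T \<triangleright> lam\<^sub>T \<bullet> \<delta>' \<triangleleft> T \<cdot> S \<bullet> G \<triangleright> (sigma \<triangleleft> S)" mu G]
    mate_r_vc_wr[of "T \<triangleright> lam\<^sub>T \<bullet> \<delta>' \<triangleleft> T \<cdot> S" "G \<triangleright> sigma"]
    mate_r_vc_wr[of "T \<triangleright> lam\<^sub>T" "\<delta>' \<triangleleft> T"] mate_r_wl[of lam\<^sub>T T "G \<cdot> T"]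
    whiskered_comp_eq_mates[of \<delta>' sigma G T, symmetric]
  by simp


lemma wreath_iff_mixed_opwreath:
  "wreath C A T mu eta S nu sigma lam \<longleftrightarrow>
   mixed_opwreath C A T mu eta G (mate_zeta C T G u e lam) (mate_delta C T G S u e nu) (mate_eps C T G e sigma)"
proof -
  have W1: "lam \<bullet> mu \<triangleleft> S = S \<triangleright> mu \<bullet> lam \<triangleleft> T \<bullet> T \<triangleright> lam \<longleftrightarrow>
      \<zeta> \<bullet> G \<triangleright> mu = mu \<triangleleft> G \<bullet> T \<triangleright> \<zeta> \<bullet> \<zeta> \<triangleleft> T"
    by (simp flip: mate_W1_lhs mate_W1_rhs add: mate_l_eq_iff mate_r_eq_iff)
  have W2: "lam \<bullet> eta \<triangleleft> S = S \<triangleright> eta \<longleftrightarrow> \<zeta> \<bullet> G \<triangleright> eta = eta \<triangleleft> G"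
    by (simp flip: mate_W2_lhs mate_W2_rhs add: mate_l_eq_iff mate_r_eq_iff)
  have W3: "S \<triangleright> mu \<bullet> lam \<triangleleft> T \<bullet> T \<triangleright> sigma = S \<triangleright> mu \<bullet> sigma \<triangleleft> T \<longleftrightarrow>
      mu \<bullet> \<epsilon> \<triangleleft> T = mu \<bullet> T \<triangleright> \<epsilon> \<bullet> \<zeta>"
    by (simp flip: mate_W3_lhs mate_W3_rhs add: mate_l_eq_iff eq_commute)
  have W4: "S \<triangleright> mu \<bullet> nu \<triangleleft> T \<bullet> S \<triangleright> lam \<bullet> lam \<triangleleft> S = S \<triangleright> mu \<bullet> lam \<triangleleft> T \<bullet> T \<triangleright> nu \<longleftrightarrow>
      mu \<triangleleft> G \<cdot> G \<bullet> T \<triangleright> (\<zeta> \<triangleleft> G) \<bullet> (T \<cdot> G) \<triangleright> \<zeta> \<bullet> \<delta> \<triangleleft> T = mu \<triangleleft> G \<cdot> G \<bullet> T \<triangleright> \<delta> \<bullet> \<zeta>"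
    by (simp flip: mate_W4_lhs mate_W4_rhs add: mate_l_eq_iff mate_r_eq_iff)
  have W5: "S \<triangleright> mu \<bullet> nu \<triangleleft> T \<bullet> S \<triangleright> nu = S \<triangleright> mu \<bullet> nu \<triangleleft> T \<bullet> S \<triangleright> lam \<bullet> nu \<triangleleft> S \<longleftrightarrow>
      mu \<triangleleft> G \<cdot> G \<cdot> G \<bullet> T \<triangleright> (\<delta> \<triangleleft> G) \<bullet> \<delta>
      = mu \<triangleleft> G \<cdot> G \<cdot> G \<bullet> T \<triangleright> (\<zeta> \<triangleleft> G \<cdot> G) \<bullet> (T \<cdot> G) \<triangleright> \<delta> \<bullet> \<delta>"
    by (simp flip: mate_W5_lhs mate_W5_rhs add: mate_l_eq_iff mate_r_eq_iff)
  have W6: "S \<triangleright> mu \<bullet> nu \<triangleleft> T \<bullet> S \<triangleright> sigma = S \<triangleright> eta \<longleftrightarrow> mu \<triangleleft> G \<bullet> T \<triangleright> (\<epsilon> \<triangleleft> G) \<bullet> \<delta> = eta \<triangleleft> G"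
    by (simp flip: mate_W6_lhs mate_W2_rhs add: mate_l_eq_iff mate_r_eq_iff)
  have W7: "S \<triangleright> mu \<bullet> nu \<triangleleft> T \<bullet> S \<triangleright> lam \<bullet> sigma \<triangleleft> S = S \<triangleright> eta \<longleftrightarrow>
      mu \<triangleleft> G \<bullet> T \<triangleright> \<zeta> \<bullet> (T \<cdot> G) \<triangleright> \<epsilon> \<bullet> \<delta> = eta \<triangleleft> G"
    by (simp flip: mate_W7_lhs mate_W2_rhs add: mate_l_eq_iff mate_r_eq_iff)
  have types: "cell_in C nu (S \<cdot> S) (S \<cdot> T)" "cell_in C sigma \<one> (S \<cdot> T)" "cell_in C lam (T \<cdot> S) (S \<cdot> T)"
    "cell_in C \<zeta> (G \<cdot> T) (T \<cdot> G)" "cell_in C \<delta> G (T \<cdot> G \<cdot> G)" "cell_in C \<epsilon> G T"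
    unfolding cell_in_def by (simp_all add: endo_cell_cell)
  show ?thesis
    unfolding wreath_def mixed_opwreath_def mate_zeta_eq mate_delta_eq mate_eps_eq
    using W1 W2 W3 W4 W5 W6 W7 types by simp
qed

lemma lam_eq_mate_inv: "mate_l_inv (T \<cdot> S) (mate_r_inv T (mate_zeta C T G u e lam)) = lam"
  unfolding mate_zeta_eq using mate_r_inv_mate_r[of lam\<^sub>T "G \<cdot> T"] mate_l_inv_mate_l[of lam T] by simp

lemma nu_eq_mate_inv:
  "mate_l_inv (S \<cdot> S) (mate_r_inv T (mate_r_inv (T \<cdot> G) (mate_delta C T G S u e nu))) = nu"
  unfolding mate_delta_eq
  using mate_r_inv_mate_r[of \<delta>' G] mate_r_inv_mate_r[of nu\<^sub>T "G \<cdot> S"] mate_l_inv_mate_l[of nu T] by simp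

lemma sigma_eq_mate_inv: "mate_l_inv \<one> (mate_eps C T G e sigma) = sigma"
  unfolding mate_eps_eq using mate_l_inv_mate_l[of sigma T] by simp

end

context monad_adjunction begin

abbreviation mates where
  "mates \<equiv> \<lambda>(nu, sigma, lam). (mate_zeta C T G u e lam, mate_delta C T G S u e nu, mate_eps C T G e sigma)"

abbreviation wreaths where "wreaths \<equiv> {(nu, sigma, lam). wreath C A T mu eta S nu sigma lam}"

abbreviation mixed_opwreaths where
  "mixed_opwreaths \<equiv> {(zeta, delta, eps). mixed_opwreath C A T mu eta G zeta delta eps}"

lemma wreath_cells_if_wreath: "wreath C A T mu eta S nu sigma lam \<Longrightarrow> wreath_cells C A G S u e T mu eta nu sigma lam"
  by unfold_locales (auto simp: wreath_def cell_in_def endo_cell_def)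

lemma inj_on_mates_wreaths: "inj_on mates wreaths"
proof (rule inj_onI, clarsimp)
  fix nu sigma lam nu' sigma' lam'
  assume "wreath C A T mu eta S nu sigma lam" "wreath C A T mu eta S nu' sigma' lam'"
    and "mate_zeta C T G u e lam = mate_zeta C T G u e lam'"
    and "mate_delta C T G S u e nu = mate_delta C T G S u e nu'"
    and "mate_eps C T G e sigma = mate_eps C T G e sigma'"
  then show "nu = nu' \<and> sigma = sigma' \<and> lam = lam'"
    using wreath_cells.lam_eq_mate_inv wreath_cells.nu_eq_mate_inv wreath_cells.sigma_eq_mate_inv
      wreath_cells_if_wreath
    by metis
qed

lemma mixed_opwreath_is_mate:
  assumes "mixed_opwreath C A T mu eta G zeta delta eps"
  obtains nu sigma lam where "wreath C A T mu eta S nu sigma lam"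
    and "mates (nu, sigma, lam) = (zeta, delta, eps)"
proof -
  have zeta: "endo_cell zeta" "dom2 C zeta = G \<cdot> T" "cod2 C zeta = T \<cdot> G"
    and delta: "endo_cell delta" "dom2 C delta = G" "cod2 C delta = T \<cdot> G \<cdot> G"
    and eps: "endo_cell eps" "dom2 C eps = G" "cod2 C eps = T"
    using assms unfolding mixed_opwreath_def cell_in_def endo_cell_def by auto
  define lam where "lam = mate_l_inv (T \<cdot> S) (mate_r_inv T zeta)"
  define nu where "nu = mate_l_inv (S \<cdot> S) (mate_r_inv T (mate_r_inv (T \<cdot> G) delta))"
  define sigma where "sigma = mate_l_inv \<one> eps"
  interpret wreath_cells C A G S u e T mu eta nu sigma lam
    by unfold_locales (use zeta delta eps in \<open>simp_all add: lam_def nu_def sigma_def\<close>)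
  have "mate_zeta C T G u e lam = zeta"
    unfolding mate_zeta_eq unfolding lam_def
    using mate_l_mate_l_inv[of "mate_r_inv T zeta" "T \<cdot> S"] mate_r_mate_r_inv[of zeta T] zeta by simp
  moreover have "mate_delta C T G S u e nu = delta"
    unfolding mate_delta_eq unfolding nu_def
    using mate_l_mate_l_inv[of "mate_r_inv T (mate_r_inv (T \<cdot> G) delta)" "S \<cdot> S"]
      mate_r_mate_r_inv[of "mate_r_inv (T \<cdot> G) delta" T] mate_r_mate_r_inv[of delta "T \<cdot> G"] delta
    by simp
  moreover have "mate_eps C T G e sigma = eps"
    unfolding mate_eps_eq unfolding sigma_def using mate_l_mate_l_inv[of eps \<one>] eps by simp
  ultimately show ?thesis
    using that wreath_iff_mixed_opwreath assms by simp
qed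

lemma image_mates_wreaths: "mates ` wreaths = mixed_opwreaths"
proof (intro set_eqI iffI)
  fix x assume "x \<in> mates ` wreaths"
  then show "x \<in> mixed_opwreaths"
    using wreath_cells.wreath_iff_mixed_opwreath[OF wreath_cells_if_wreath] by auto
next
  fix x assume "x \<in> mixed_opwreaths"
  then obtain zeta delta eps where "x = (zeta, delta, eps)" "mixed_opwreath C A T mu eta G zeta delta eps"
    by auto
  then show "x \<in> mates ` wreaths"
    by (metis (no_types, lifting) case_prodI image_eqI mem_Collect_eq mixed_opwreath_is_mate)
qed

end

theorem proposition3p4:
  fixes C :: "('o, 'm, 'c) two_cat"
  assumes "two_category C"
    and "A \<in> ob C"
    and "monad C A T mu eta"
    and "adjunction C A G S u e"
  shows "bij_betw
           (\<lambda>(nu, sigma, lam). (mate_zeta C T G u e lam, mate_delta C T G S u e nu, mate_eps C T G e sigma))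
           {(nu, sigma, lam). wreath C A T mu eta S nu sigma lam}
           {(zeta, delta, eps). mixed_opwreath C A T mu eta G zeta delta eps}"
proof -
  interpret monad_adjunction C A G S u e T mu eta
    by (intro monad_adjunction.intro endo_adjunction.intro endo_two_category.intro
        endo_adjunction_axioms.intro monad_adjunction_axioms.intro) (rule assms)+
  show ?thesis
    using inj_on_mates_wreaths image_mates_wreaths by (rule bij_betw_imageI)
qed

end
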